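(* Let $M=G/\Gamma$ be a 2-step nilmanifold with invariant abelian complex structure and $\dim_{\mathbb C}\mathfrak c^{1,0}=1$. Let $\Lambda=\Lambda_1+\Lambda_2$ be an invariant holomorphic Poisson bivector with $\Lambda_1\in\mathfrak t^{1,0}\otimes\mathfrak c^{1,0}$ and $\Lambda_2\in\wedge^2\mathfrak t^{1,0}$. If the spectral sequence of the Poisson bi-complex of $\Lambda$ degenerates on the first page, then $\Lambda_2$ is in the center of the Schouten algebra $\oplus_{p,q}B^{p,q}$, i.e. $\mathrm{ad}_{\Lambda_2}\equiv0$ on $B^{p,q}$ for all $p,q\ge0$.
   Context: $G$ is a simply connected nilpotent Lie group with Lie algebra $\mathfrak g$, $\Gamma$ a lattice, 2-step: $[\mathfrak g,\mathfrak g]\subseteq\mathfrak c$ (center). $J$ is a left-invariant abelian complex structure ($J^2=-1$, $[JA,JB]=[A,B]$), so $\mathfrak g^{1,0}$ is abelian. $\mathfrak g^{1,0}=\mathfrak t^{1,0}\oplus\mathfrak c^{1,0}$ with $\mathfrak c^{1,0}$ the $(1,0)$-part of the center, basis $W_\ell$, and $\mathfrak t^{1,0}$ with basis $T_k$, such that the only nonzero brackets are $[\bar T_k,T_j]=\sum_\ell E^\ell_{kj}W_\ell-\sum_\ell\bar E^\ell_{jk}\bar W_\ell$; dual basis $\omega^k,\rho^\ell$ with $d\omega^k=0$, $d\rho^\ell=\sum E^\ell_{ji}\omega^i\wedge\bar\omega^j$; $\mathfrak t^{*(0,1)}=\mathrm{span}\{\bar\omega^k\}$, $\mathfrak c^{*(0,1)}=\mathrm{span}\{\bar\rho^\ell\}$.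 $B^{p,q}=\wedge^p\mathfrak g^{1,0}\otimes\wedge^q\mathfrak g^{*(0,1)}$, viewed as invariant elements of $A^{p,q}=C^\infty(M,\wedge^pT^{1,0}M\otimes\wedge^qT^{*(0,1)}M)$; it is preserved by $\bar\partial$ (the Dolbeault operator with values in $(p,0)$-vectors, $B^{p,q}\to B^{p,q+1}$) and by the Schouten bracket (graded extension of the Lie bracket on $\mathfrak g^{1,0}$, $[V,\bar\omega]=\iota_Vd\bar\omega$, $[\bar\omega_1,\bar\omega_2]=0$). A holomorphic Poisson structure is a holomorphic bivector $\Lambda$ with $[\Lambda,\Lambda]=0$; the Poisson bi-complex is $(A^{p,q},\mathrm{ad}_\Lambda,\bar\partial)$ with $\mathrm{ad}_\Lambda=[\Lambda,\cdot]:A^{p,q}\to A^{p+1,q}$; filtering by $p$ gives a spectral sequence with $E_1^{p,q}=H^q(M,\Theta^p)$ ($\Theta^p$ the sheaf of holomorphic $p$-vector fields) and $d_1$ induced by $\mathrm{ad}_\Lambda$. "Degenerates on the first page" means $d_1\equiv0$. By a known result the inclusion $B^{p,q}\subset A^{p,q}$ induces isomorphisms $H^q(\mathfrak g^{p,0})\cong H^q(M,\Theta^p)$, where $H^q(\mathfrak g^{p,0})$ is the $\bar\partial$-cohomology of $B^{p,\bullet}$. *)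

theory Defs
  imports Complex_Main
begin

text \<open>
Algebraic model.  n = dim t^{1,0}; dim c^{1,0} = 1 with basis W.
The structure constants are E k j = E^1_{kj}, i.e.
  [conj T_k, T_j] = E k j * W - cnj (E j k) * conj W.

Generators of the Schouten algebra B = wedge(g^{1,0} + g^{*(0,1)}), indexed by nat:
  0..n-1     : T_0 .. T_{n-1}
  n          : W
  n+1+k      : conj omega^k   (k < n)
  2n+1       : conj rho
An element of B is a coefficient function on finite sets S of generators,
the set S standing for the wedge of its elements in increasing order.
\<close>

type_synonym elem = "nat set \<Rightarrow> complex"

definition gens :: "nat \<Rightarrow> nat set" where
  "gens n = {..<2*n+2}"

definition inB :: "nat \<Rightarrow> elem \<Rightarrow> bool" where
  "inB n x \<longleftrightarrow> (\<forall>S. x S \<noteq> 0 \<longrightarrow> S \<subseteq> gens n)"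

definition vdeg :: "nat \<Rightarrow> nat set \<Rightarrow> nat" where
  "vdeg n S = card (S \<inter> {..n})"

definition fdeg :: "nat \<Rightarrow> nat set \<Rightarrow> nat" where
  "fdeg n S = card (S \<inter> {n<..})"

definition Bpq :: "nat \<Rightarrow> nat \<Rightarrow> nat \<Rightarrow> elem set" where
  "Bpq n p q = {x. inB n x \<and> (\<forall>S. x S \<noteq> 0 \<longrightarrow> vdeg n S = p \<and> fdeg n S = q)}"

definition zeroB :: elem where
  "zeroB = (\<lambda>U. 0)"

definition addB :: "elem \<Rightarrow> elem \<Rightarrow> elem" where
  "addB x y = (\<lambda>U. x U + y U)"

definition mono :: "nat set \<Rightarrow> elem" where
  "mono S = (\<lambda>U. if U = S then 1 else 0)"

text \<open>sign of the shuffle putting the ordered wedge of S followed by that of T into increasing order\<close>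
definition shsgn :: "nat set \<Rightarrow> nat set \<Rightarrow> complex" where
  "shsgn S T = (-1) ^ card {(s, t). s \<in> S \<and> t \<in> T \<and> t < s}"

definition wedge :: "elem \<Rightarrow> elem \<Rightarrow> elem" where
  "wedge x y = (\<lambda>U. \<Sum>S\<in>Pow U. shsgn S (U - S) * x S * y (U - S))"

definition pos :: "nat set \<Rightarrow> nat \<Rightarrow> nat" where
  "pos S g = card {s\<in>S. s < g}"

definition lin :: "nat \<Rightarrow> (nat set \<Rightarrow> elem) \<Rightarrow> elem \<Rightarrow> elem" where
  "lin n f x = (\<lambda>U. \<Sum>S\<in>Pow (gens n). x S * f S U)"

definition bilin :: "nat \<Rightarrow> (nat set \<Rightarrow> nat set \<Rightarrow> elem) \<Rightarrow> elem \<Rightarrow> elem \<Rightarrow> elem" where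
  "bilin n f x y = (\<lambda>U. \<Sum>A\<in>Pow (gens n). \<Sum>B\<in>Pow (gens n). x A * y B * f A B U)"

text \<open>extension of generator values D to an odd (degree +1) derivation of B\<close>
definition oderiv :: "nat \<Rightarrow> (nat \<Rightarrow> elem) \<Rightarrow> elem \<Rightarrow> elem" where
  "oderiv n D = lin n (\<lambda>S U. \<Sum>g\<in>S. (-1) ^ pos S g *
      wedge (wedge (mono {s\<in>S. s < g}) (D g)) (mono {s\<in>S. g < s}) U)"

text \<open>dbar on generators: dbar T_j = sum_k E k j W wedge conj omega^k
  (from (dbar V)(conj X) = [conj X, V]^{1,0}); dbar W = 0, dbar conj omega^k = 0,
  dbar conj rho = (d conj rho)^{0,2} = 0.\<close>
definition dbar_gen :: "nat \<Rightarrow> (nat \<Rightarrow> nat \<Rightarrow> complex) \<Rightarrow> nat \<Rightarrow> elem" where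
  "dbar_gen n E g = (\<lambda>U. if g < n then (\<Sum>k<n. E k g * mono {n, n+1+k} U) else 0)"

definition dbar :: "nat \<Rightarrow> (nat \<Rightarrow> nat \<Rightarrow> complex) \<Rightarrow> elem \<Rightarrow> elem" where
  "dbar n E = oderiv n (dbar_gen n E)"

text \<open>Lie bracket on the generators L = g^{1,0} + g^{*(0,1)}:
  g^{1,0} abelian, [V, conj omega] = iota_V d(conj omega), forms commute.
  d conj omega^k = 0 and d conj rho = sum cnj(E j i) conj omega^i wedge omega^j, so
  [T_m, conj rho] = - sum_i cnj (E m i) conj omega^i, and [conj rho, T_m] = - [T_m, conj rho].\<close>
definition brg :: "nat \<Rightarrow> (nat \<Rightarrow> nat \<Rightarrow> complex) \<Rightarrow> nat \<Rightarrow> nat \<Rightarrow> elem" where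
  "brg n E i j = (\<lambda>U.
     if i < n \<and> j = 2*n+1 then - (\<Sum>k<n. cnj (E i k) * mono {n+1+k} U)
     else if i = 2*n+1 \<and> j < n then (\<Sum>k<n. cnj (E j k) * mono {n+1+k} U)
     else 0)"

definition schouten :: "nat \<Rightarrow> (nat \<Rightarrow> nat \<Rightarrow> complex) \<Rightarrow> elem \<Rightarrow> elem \<Rightarrow> elem" where
  "schouten n E = bilin n (\<lambda>A B U. \<Sum>i\<in>A. \<Sum>j\<in>B. (-1) ^ (pos A i + pos B j) *
      wedge (wedge (brg n E i j) (mono (A - {i}))) (mono (B - {j})) U)"

definition dbar_exact :: "nat \<Rightarrow> (nat \<Rightarrow> nat \<Rightarrow> complex) \<Rightarrow> nat \<Rightarrow> nat \<Rightarrow> elem \<Rightarrow> bool" where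
  "dbar_exact n E p q z \<longleftrightarrow>
     z = zeroB \<or> (\<exists>q' y. q = Suc q' \<and> y \<in> Bpq n p q' \<and> dbar n E y = z)"

text \<open>d_1 \<equiv> 0 on E_1^{p,q} = H^q(g^{p,0}) (\<cong> H^q(M,Theta^p)), d_1[x] = [ad_Lambda x]\<close>
definition degenerates_E1 :: "nat \<Rightarrow> (nat \<Rightarrow> nat \<Rightarrow> complex) \<Rightarrow> elem \<Rightarrow> bool" where
  "degenerates_E1 n E L \<longleftrightarrow>
     (\<forall>p q x. x \<in> Bpq n p q \<longrightarrow> dbar n E x = zeroB \<longrightarrow>
        dbar_exact n E (p+1) q (schouten n E L x))"

text \<open>c^{1,0} = span W is the whole (1,0)-part of the center: no nonzero
  V = sum v_j T_j is central, i.e. [conj T_k, V] = 0 for all k forces V = 0.\<close>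
definition center_is_W :: "nat \<Rightarrow> (nat \<Rightarrow> nat \<Rightarrow> complex) \<Rightarrow> bool" where
  "center_is_W n E \<longleftrightarrow> (\<forall>v :: nat \<Rightarrow> complex.
     (\<forall>k<n. (\<Sum>j<n. E k j * v j) = 0 \<and> (\<Sum>j<n. cnj (E j k) * v j) = 0) \<longrightarrow> (\<forall>j<n. v j = 0))"

text \<open>Lie bracket of g \<otimes> C in coordinates w.r.t. T_0..T_{n-1}, W, conj T_0..conj T_{n-1}, conj W
  (indices 0..n-1, n, n+1..2n, 2n+1).\<close>
definition lie_br :: "nat \<Rightarrow> (nat \<Rightarrow> nat \<Rightarrow> complex) \<Rightarrow> (nat \<Rightarrow> complex) \<Rightarrow> (nat \<Rightarrow> complex) \<Rightarrow> nat \<Rightarrow> complex" where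
  "lie_br n E u v i =
    (if i = n then (\<Sum>k<n. \<Sum>j<n. (u (n+1+k) * v j - v (n+1+k) * u j) * E k j)
     else if i = 2*n+1 then - (\<Sum>k<n. \<Sum>j<n. (u (n+1+k) * v j - v (n+1+k) * u j) * cnj (E j k))
     else 0)"

definition is_real_vec :: "nat \<Rightarrow> (nat \<Rightarrow> complex) \<Rightarrow> bool" where
  "is_real_vec n u \<longleftrightarrow> (\<forall>k<n. u (n+1+k) = cnj (u k)) \<and> u (2*n+1) = cnj (u n)"

text \<open>G admits a lattice (Malcev): the real Lie algebra g has a basis with rational structure constants.\<close>
definition has_lattice :: "nat \<Rightarrow> (nat \<Rightarrow> nat \<Rightarrow> complex) \<Rightarrow> bool" where
  "has_lattice n E \<longleftrightarrow> (\<exists>(v :: nat \<Rightarrow> nat \<Rightarrow> complex) (C :: nat \<Rightarrow> nat \<Rightarrow> nat \<Rightarrow> rat).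
     (\<forall>a<2*n+2. is_real_vec n (v a)) \<and>
     (\<forall>c :: nat \<Rightarrow> real. (\<forall>i<2*n+2. (\<Sum>a<2*n+2. complex_of_real (c a) * v a i) = 0)
                          \<longrightarrow> (\<forall>a<2*n+2. c a = 0)) \<and>
     (\<forall>a<2*n+2. \<forall>b<2*n+2. \<forall>i<2*n+2.
        lie_br n E (v a) (v b) i = (\<Sum>e<2*n+2. of_rat (C a b e) * v e i)))"

definition in_t_c :: "nat \<Rightarrow> elem \<Rightarrow> bool" where
  "in_t_c n x \<longleftrightarrow> (\<forall>S. x S \<noteq> 0 \<longrightarrow> (\<exists>k<n. S = {k, n}))"

definition in_wedge2_t :: "nat \<Rightarrow> elem \<Rightarrow> bool" where
  "in_wedge2_t n x \<longleftrightarrow> (\<forall>S. x S \<noteq> 0 \<longrightarrow> S \<subseteq> {..<n} \<and> card S = 2)"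

end

theory Submission
  imports Defs
begin

text \<open>
  The form conj rho (generator 2n+1) is a dbar-closed element of B^{0,1}, so degeneration on
  the first page makes [\<Lambda>, conj rho] dbar-exact. Every monomial of a dbar-exact element
  contains the central vector W, and so does every monomial of [\<Lambda>_1, conj rho], whereas no
  monomial of [\<Lambda>_2, conj rho] does; hence [\<Lambda>_2, conj rho] = 0. The vectors T_k commute
  with g^{1,0} and with the closed forms conj omega^k, so ad \<Lambda>_2 is the derivation determined
  by its value on conj rho, and therefore vanishes.
\<close>

lemma zeroB_apply [simp]: "zeroB U = 0"
  by (simp add: zeroB_def)

lemma wedge_nonzeroE:
  assumes "wedge x y U \<noteq> 0"
  obtains S where "S \<subseteq> U" "x S \<noteq> 0" "y (U - S) \<noteq> 0"
  using assms unfolding wedge_def by (auto elim!: sum.not_neutral_contains_not_neutral)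

lemma wedge_infinite: "infinite U \<Longrightarrow> wedge x y U = 0"
  unfolding wedge_def by simp

lemma wedge_mono_empty_right:
  assumes "\<And>U. infinite U \<Longrightarrow> x U = 0"
  shows "wedge x (mono {}) = x"
proof
  fix U
  show "wedge x (mono {}) U = x U"
  proof (cases "finite U")
    case True
    have no_inversions: "{(s, t). s \<in> U \<and> t \<in> U \<and> t \<notin> U \<and> t < s} = {}" by auto
    have "wedge x (mono {}) U = (\<Sum>S\<in>Pow U. if S = U then x U else 0)"
      unfolding wedge_def mono_def shsgn_def by (intro sum.cong) (auto simp: no_inversions)
    with True show ?thesis by simp
  qed (simp add: assms wedge_infinite)
qed

lemma wedge_zero_left: "wedge zeroB y = zeroB"
  unfolding wedge_def zeroB_def by simp

lemma wedge_sum_left: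
  "wedge (\<lambda>V. \<Sum>a\<in>F. c a * f a V) y U = (\<Sum>a\<in>F. c a * wedge (f a) y U)"
  unfolding wedge_def
  by (simp add: sum_distrib_left sum_distrib_right sum.swap[of _ F] mult_ac)

lemma dbar_gen_nonzeroD: "dbar_gen n E g V \<noteq> 0 \<Longrightarrow> g < n \<and> n \<in> V"
  by (auto simp: dbar_gen_def mono_def split: if_splits elim!: sum.not_neutral_contains_not_neutral)

lemma dbar_nonzeroE:
  assumes "dbar n E y U \<noteq> 0"
  obtains S g where "y S \<noteq> 0" "g \<in> S" "g < n" "n \<in> U"
proof -
  from assms obtain S g where S: "y S \<noteq> 0" "g \<in> S"
    and "wedge (wedge (mono {s\<in>S. s < g}) (dbar_gen n E g)) (mono {s\<in>S. g < s}) U \<noteq> 0"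
    unfolding dbar_def oderiv_def lin_def
    by (auto elim!: sum.not_neutral_contains_not_neutral)
  then obtain S1 S2 where "S1 \<subseteq> U" "S2 \<subseteq> S1" "dbar_gen n E g (S1 - S2) \<noteq> 0"
    by (auto elim!: wedge_nonzeroE)
  then have "g < n" "n \<in> U"
    by (auto dest: dbar_gen_nonzeroD)
  with S show thesis by (rule that)
qed

lemma dbar_eq_zeroB_without_t_vectors:
  assumes "\<And>S. y S \<noteq> 0 \<Longrightarrow> S \<inter> {..<n} = {}"
  shows "dbar n E y = zeroB"
proof
  fix U
  show "dbar n E y U = zeroB U"
    using assms by (metis disjoint_iff dbar_nonzeroE lessThan_iff zeroB_apply)
qed

lemma dbar_exact_supp_contains_W:
  assumes "dbar_exact n E p q z" "z U \<noteq> 0"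
  shows "n \<in> U"
  using assms by (auto simp: dbar_exact_def elim!: dbar_nonzeroE)

lemma brg_nonzeroD:
  assumes "brg n E i j V \<noteq> 0"
  shows "(i < n \<and> j = 2*n+1 \<or> i = 2*n+1 \<and> j < n) \<and> n \<notin> V"
  using assms
  by (auto simp: brg_def mono_def split: if_splits elim!: sum.not_neutral_contains_not_neutral)

lemma schouten_nonzeroE:
  assumes "schouten n E L x U \<noteq> 0"
  obtains A B i j S where "L A \<noteq> 0" "x B \<noteq> 0" "i \<in> A" "j \<in> B" "brg n E i j S \<noteq> 0"
    "U = S \<union> (A - {i}) \<union> (B - {j})"
proof -
  from assms obtain A B i j where "L A \<noteq> 0" "x B \<noteq> 0" "i \<in> A" "j \<in> B"
    and "wedge (wedge (brg n E i j) (mono (A - {i}))) (mono (B - {j})) U \<noteq> 0"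
    unfolding schouten_def bilin_def by (auto elim!: sum.not_neutral_contains_not_neutral)
  moreover from this(5) obtain S1 S where "S1 \<subseteq> U" "U - S1 = B - {j}"
    "S \<subseteq> S1" "brg n E i j S \<noteq> 0" "S1 - S = A - {i}"
    by (auto simp: mono_def split: if_splits elim!: wedge_nonzeroE)
  ultimately show thesis
    by (intro that[of A B i j S]) auto
qed

lemma schouten_addB_left:
  "schouten n E (addB a b) x U = schouten n E a x U + schouten n E b x U"
  by (simp add: schouten_def bilin_def addB_def distrib_right sum.distrib)

lemma schouten_t_c_supp_contains_W:
  assumes "in_t_c n L" "schouten n E L x U \<noteq> 0"
  shows "n \<in> U"
  using assms(2)
proof (rule schouten_nonzeroE)
  fix A B i j S
  assume "L A \<noteq> 0" "i \<in> A" "brg n E i j S \<noteq> 0" "U = S \<union> (A - {i}) \<union> (B - {j})"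
  with assms(1) brg_nonzeroD show "n \<in> U"
    unfolding in_t_c_def by fastforce
qed

lemma schouten_wedge2_t_rho_supp_avoids_W:
  assumes "in_wedge2_t n L" "schouten n E L (mono {2*n+1}) U \<noteq> 0"
  shows "n \<notin> U"
  using assms(2)
proof (rule schouten_nonzeroE)
  fix A B i j S
  assume "L A \<noteq> 0" "mono {2*n+1} B \<noteq> 0" "j \<in> B" "brg n E i j S \<noteq> 0"
    "U = S \<union> (A - {i}) \<union> (B - {j})"
  with assms(1) brg_nonzeroD show "n \<notin> U"
    unfolding in_wedge2_t_def mono_def by (fastforce split: if_splits)
qed

lemma schouten_mono_rho:
  "schouten n E L (mono {2*n+1}) =
   (\<lambda>V. \<Sum>A\<in>Pow (gens n). L A *
      (\<Sum>i\<in>A. (-1) ^ pos A i * wedge (brg n E i (2*n+1)) (mono (A - {i})) V))"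
proof
  fix V
  have "schouten n E L (mono {2*n+1}) V = (\<Sum>A\<in>Pow (gens n). \<Sum>B\<in>Pow (gens n).
      if B = {2*n+1} then L A * (\<Sum>i\<in>A. \<Sum>j\<in>B. (-1) ^ (pos A i + pos B j) *
      wedge (wedge (brg n E i j) (mono (A - {i}))) (mono (B - {j})) V) else 0)"
    unfolding schouten_def bilin_def by (intro sum.cong refl) (auto simp: mono_def)
  also have "\<dots> = (\<Sum>A\<in>Pow (gens n). L A * (\<Sum>i\<in>A. (-1) ^ pos A i *
      wedge (wedge (brg n E i (2*n+1)) (mono (A - {i}))) (mono {}) V))"
    by (simp add: gens_def pos_def del: Diff_cancel cong: conj_cong)
  also have "\<dots> = (\<Sum>A\<in>Pow (gens n). L A * (\<Sum>i\<in>A. (-1) ^ pos A i *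
      wedge (brg n E i (2*n+1)) (mono (A - {i})) V))"
    by (simp add: wedge_mono_empty_right wedge_infinite)
  finally show "schouten n E L (mono {2*n+1}) V = \<dots>" .
qed

lemma schouten_expand_rho:
  assumes t_vectors: "{A. L A \<noteq> 0} \<subseteq> Pow {..<n}"
  shows "schouten n E L x U = (\<Sum>B\<in>Pow (gens n). if 2*n+1 \<in> B
           then x B * (-1) ^ pos B (2*n+1) *
             wedge (schouten n E L (mono {2*n+1})) (mono (B - {2*n+1})) U
           else 0)" (is "_ = ?rhs")
proof -
  let ?\<rho> = "2*n+1"
  define F where "F A B = (\<Sum>i\<in>A. \<Sum>j\<in>B. (-1) ^ (pos A i + pos B j) *
      wedge (wedge (brg n E i j) (mono (A - {i}))) (mono (B - {j})) U)" for A B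
  have collapse: "L A * F A B = (if ?\<rho> \<in> B then (-1) ^ pos B ?\<rho> * (L A *
      (\<Sum>i\<in>A. (-1) ^ pos A i *
        wedge (wedge (brg n E i ?\<rho>) (mono (A - {i}))) (mono (B - {?\<rho>})) U)) else 0)"
    if "finite B" for A B
  proof (cases "L A = 0")
    case False
    have "brg n E i j = zeroB" if "i \<in> A" "j \<noteq> ?\<rho>" for i j
      using t_vectors False that brg_nonzeroD unfolding zeroB_def by fastforce
    then have "F A B = (\<Sum>i\<in>A. \<Sum>j\<in>B. if j = ?\<rho> then (-1) ^ (pos A i + pos B j) *
      wedge (wedge (brg n E i j) (mono (A - {i}))) (mono (B - {j})) U else 0)"
      unfolding F_def by (intro sum.cong refl) (auto simp: wedge_zero_left)
    with \<open>finite B\<close> show ?thesis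
      by (simp add: power_add sum_distrib_left mult_ac)
  qed simp
  have wedge_rho_bracket: "wedge (schouten n E L (mono {?\<rho>})) M U =
      (\<Sum>A\<in>Pow (gens n). L A * (\<Sum>i\<in>A. (-1) ^ pos A i *
        wedge (wedge (brg n E i ?\<rho>) (mono (A - {i}))) M U))" for M
    unfolding schouten_mono_rho by (simp add: wedge_sum_left)
  have sum_over_L: "(\<Sum>A\<in>Pow (gens n). L A * F A B) = (if ?\<rho> \<in> B
      then (-1) ^ pos B ?\<rho> * wedge (schouten n E L (mono {?\<rho>})) (mono (B - {?\<rho>})) U else 0)"
    if "B \<subseteq> gens n" for B
  proof -
    have "finite B" using that by (simp add: gens_def finite_subset)
    then show ?thesis unfolding wedge_rho_bracket by (simp add: collapse sum_distrib_left)
  qed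
  have "schouten n E L x U = (\<Sum>B\<in>Pow (gens n). x B * (\<Sum>A\<in>Pow (gens n). L A * F A B))"
    unfolding schouten_def bilin_def F_def
    by (subst sum.swap) (simp add: sum_distrib_left mult_ac)
  also have "\<dots> = ?rhs"
    by (intro sum.cong refl) (simp add: sum_over_L)
  finally show ?thesis .
qed

lemma schouten_eq_zeroB_if_rho:
  assumes t_vectors: "{A. L A \<noteq> 0} \<subseteq> Pow {..<n}"
    and rho: "schouten n E L (mono {2*n+1}) = zeroB"
  shows "schouten n E L x = zeroB"
proof
  fix U
  show "schouten n E L x U = zeroB U"
    using schouten_expand_rho[OF t_vectors, of E x U] unfolding rho
    by (simp add: wedge_zero_left cong: if_cong)
qed

theorem mainTheorem8:
  fixes n :: nat and E :: "nat \<Rightarrow> nat \<Rightarrow> complex" and L1 L2 :: elem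
  assumes lattice: "has_lattice n E"
    and center: "center_is_W n E"
    and L1: "in_t_c n L1"
    and L2: "in_wedge2_t n L2"
    and holo: "dbar n E (addB L1 L2) = zeroB"
    and poisson: "schouten n E (addB L1 L2) (addB L1 L2) = zeroB"
    and degen: "degenerates_E1 n E (addB L1 L2)"
  shows "\<forall>p q x. x \<in> Bpq n p q \<longrightarrow> schouten n E L2 x = zeroB"
proof -
  let ?\<rho> = "mono {2*n+1}"
  have "?\<rho> \<in> Bpq n 0 1"
    by (auto simp: Bpq_def inB_def mono_def gens_def vdeg_def fdeg_def Int_absorb1 Int_absorb2)
  moreover have "dbar n E ?\<rho> = zeroB"
    by (rule dbar_eq_zeroB_without_t_vectors) (simp add: mono_def split: if_splits)
  ultimately have exact: "dbar_exact n E 1 1 (schouten n E (addB L1 L2) ?\<rho>)"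
    using degen unfolding degenerates_E1_def by fastforce
  have "schouten n E L2 ?\<rho> U = 0" for U
  proof (cases "n \<in> U")
    case True
    then show ?thesis using schouten_wedge2_t_rho_supp_avoids_W[OF L2] by blast
  next
    case False
    then have "schouten n E (addB L1 L2) ?\<rho> U = 0" "schouten n E L1 ?\<rho> U = 0"
      using dbar_exact_supp_contains_W[OF exact] schouten_t_c_supp_contains_W[OF L1] by blast+
    then show ?thesis by (simp add: schouten_addB_left)
  qed
  then have "schouten n E L2 ?\<rho> = zeroB"
    by (simp add: fun_eq_iff)
  moreover have "{A. L2 A \<noteq> 0} \<subseteq> Pow {..<n}"
    using L2 unfolding in_wedge2_t_def by blast
  ultimately show ?thesis
    using schouten_eq_zeroB_if_rho by blast
qed

end
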